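(* Let $w_0,w_1$ be words of length $N$. If $w_0\to w_1$ is a perfect star anagram with path $p$ and constant step size $S$ (i.e. $p$ is a perfect star path with $s_n=S$ for all $n$), then $w_1\to w_0$ is a perfect star anagram with the reversed path $\bar p$, whose steps are all equal to a constant $\bar S$ satisfying $\bar S S \bmod N = 1$.
   Context: A path of length $N$ is a vector $p=(p_0,\dots,p_{N-1})$ whose entries are the integers $0,\dots,N-1$ in some order; indices are cyclic, $p_N=p_0$. For an integer $x$, $x\bmod N$ is its remainder in $\{0,\dots,N-1\}$. If $w_0=a_0\cdots a_{N-1}$, then $p$ is a path for the anagram $w_0\to w_1$ if $w_1=a_{p_0}\cdots a_{p_{N-1}}$. The path differences are $d_n=p_{n+1}-p_n$, and the steps are $s_n=d_n$ if $|d_n|<N/2$; $s_n=N/2$ if $|d_n|=N/2$; $s_n=d_n-N$ if $d_n>N/2$; $s_n=d_n+N$ if $d_n<-N/2$. A star path is a path with $|s_n|\neq 1$ for all $n$; a perfect star path is a star path all of whose edge lengths $|s_n|$ are equal (equivalently all $s_n$ equal a common constant). The anagram is a perfect star anagram with path $p$ if $p$ is a path for it that is a perfect star path. The reversed path $\bar p$ is the inverse permutation of $p$: $\bar p_{p_n}=n$ and $p_{\bar p_n}=n$ for all $n$; it is a path for $w_1\to w_0$, and its steps $\bar s_n$ are defined from $\bar p$ in the same way. *)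

theory Defs
  imports Main
begin

(* A path of length N: the entries p 0, ..., p (N-1) are 0..N-1 in some order.
   Indices are cyclic: p_N = p_0, realised by p ((n+1) mod N). *)
definition is_path :: "nat \<Rightarrow> (nat \<Rightarrow> nat) \<Rightarrow> bool" where
  "is_path N p \<longleftrightarrow> bij_betw p {..<N} {..<N}"

definition path_diff :: "nat \<Rightarrow> (nat \<Rightarrow> nat) \<Rightarrow> nat \<Rightarrow> int" where
  "path_diff N p n = int (p (Suc n mod N)) - int (p n)"

definition path_step :: "nat \<Rightarrow> (nat \<Rightarrow> nat) \<Rightarrow> nat \<Rightarrow> int" where
  "path_step N p n =
     (let d = path_diff N p n in
      if 2 * \<bar>d\<bar> < int N then d
      else if 2 * \<bar>d\<bar> = int N then int N div 2
      else if 2 * d > int N then d - int N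
      else d + int N)"

definition star_path :: "nat \<Rightarrow> (nat \<Rightarrow> nat) \<Rightarrow> bool" where
  "star_path N p \<longleftrightarrow> is_path N p \<and> (\<forall>n<N. \<bar>path_step N p n\<bar> \<noteq> 1)"

definition perfect_star_path :: "nat \<Rightarrow> (nat \<Rightarrow> nat) \<Rightarrow> bool" where
  "perfect_star_path N p \<longleftrightarrow> star_path N p \<and>
     (\<forall>n<N. \<forall>m<N. \<bar>path_step N p n\<bar> = \<bar>path_step N p m\<bar>)"

definition path_for :: "nat \<Rightarrow> 'a list \<Rightarrow> 'a list \<Rightarrow> (nat \<Rightarrow> nat) \<Rightarrow> bool" where
  "path_for N w0 w1 p \<longleftrightarrow> length w0 = N \<and> length w1 = N \<and> is_path N p \<and>
     (\<forall>n<N. w1 ! n = w0 ! p n)"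

definition perfect_star_anagram :: "nat \<Rightarrow> 'a list \<Rightarrow> 'a list \<Rightarrow> (nat \<Rightarrow> nat) \<Rightarrow> bool" where
  "perfect_star_anagram N w0 w1 p \<longleftrightarrow> path_for N w0 w1 p \<and> perfect_star_path N p"

definition rev_path :: "nat \<Rightarrow> (nat \<Rightarrow> nat) \<Rightarrow> nat \<Rightarrow> nat" where
  "rev_path N p = the_inv_into {..<N} p"

end

theory Submission
  imports Defs "HOL-Number_Theory.Cong"
begin

text \<open>A step is the representative of the path difference modulo \<open>N\<close> in the half-open
  interval \<open>(-N/2, N/2]\<close>. A constant step \<open>S\<close> therefore makes \<open>p\<close> an arithmetic progression
  \<open>p n \<equiv> p 0 + n S (mod N)\<close>. Surjectivity of \<open>p\<close> provides \<open>T\<close> with \<open>p T \<equiv> p 0 + 1\<close>, i.e.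
  \<open>T S \<equiv> 1\<close>, and then the inverse permutation is the progression \<open>m \<mapsto> (m - p 0) T\<close>, whose
  steps all equal the centred representative \<open>S\<^sub>b\<close> of \<open>T\<close>. Finally \<open>|S\<^sub>b| = 1\<close> is impossible:
  then \<open>S\<^sub>b\<^sup>2 = 1\<close>, so \<open>S \<equiv> S\<^sub>b (S\<^sub>b S) \<equiv> S\<^sub>b\<close>, and two congruent centred residues are equal,
  giving \<open>|S| = 1\<close>.\<close>

definition centred_mod :: "int \<Rightarrow> int \<Rightarrow> int" where
  "centred_mod M x = (let r = x mod M in if 2 * r \<le> M then r else r - M)"

lemma centred_mod_cong: "[centred_mod M x = x] (mod M)"
  by (simp add: centred_mod_def Let_def cong_def)

lemma centred_mod_bounds:
  assumes "0 < M"
  shows "- M < 2 * centred_mod M x" and "2 * centred_mod M x \<le> M"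
proof -
  have "0 \<le> x mod M" "x mod M < M" using assms by simp_all
  then show "- M < 2 * centred_mod M x" "2 * centred_mod M x \<le> M"
    by (auto simp: centred_mod_def Let_def)
qed

lemma centred_mod_cong_eq: "[x = y] (mod M) \<Longrightarrow> centred_mod M x = centred_mod M y"
  by (simp add: centred_mod_def cong_def)

lemma centred_mod_unique:
  assumes "[s = x] (mod M)" and "- M < 2 * s" and "2 * s \<le> M"
  shows "centred_mod M x = s"
proof (cases "0 \<le> s")
  case True
  then have "x mod M = s" using assms by (simp add: cong_def)
  then show ?thesis using assms(3) by (simp add: centred_mod_def)
next
  case False
  have "M > 0" using assms by linarith
  then have "(s + M) mod M = s + M" using assms(2) False by (intro mod_pos_pos_trivial) linarith+
  then have "x mod M = s + M" using assms(1) by (simp add: cong_def)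
  then show ?thesis using assms(2) False by (simp add: centred_mod_def)
qed

lemma path_step_cong: "[path_step N p n = path_diff N p n] (mod int N)"
proof -
  let ?d = "path_diff N p n"
  have "[int N div 2 = ?d] (mod int N)" if half: "2 * \<bar>?d\<bar> = int N"
  proof (cases "0 \<le> ?d")
    case True
    then have "int N div 2 = ?d" using half by presburger
    then show ?thesis by simp
  next
    case False
    then have "int N div 2 = ?d + int N" using half by presburger
    then show ?thesis by (simp add: cong_def)
  qed
  then show ?thesis
    by (auto simp: path_step_def Let_def cong_def)
qed

lemma path_step_eq_centred_mod:
  assumes "p n < N" and "p (Suc n mod N) < N"
  shows "path_step N p n = centred_mod (int N) (path_diff N p n)"
proof (rule sym, rule centred_mod_unique[OF path_step_cong])
  have "\<bar>path_diff N p n\<bar> < int N" using assms by (auto simp: path_diff_def)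
  then show "- int N < 2 * path_step N p n" "2 * path_step N p n \<le> int N"
    by (auto simp: path_step_def Let_def)
qed

lemma progression_of_path_diff_cong:
  assumes "\<forall>n<N. [path_diff N p n = S] (mod int N)" and "n < N"
  shows "[int (p n) = int (p 0) + int n * S] (mod int N)"
  using assms(2)
proof (induction n)
  case 0
  then show ?case by simp
next
  case (Suc n)
  then have "path_diff N p n = int (p (Suc n)) - int (p n)"
    by (simp add: path_diff_def)
  then have "[int (p (Suc n)) - int (p n) = S] (mod int N)"
    using assms(1) Suc_lessD[OF Suc.prems] by metis
  then have "[int (p (Suc n)) = int (p n) + S] (mod int N)"
    by (simp add: cong_iff_dvd_diff algebra_simps)
  also have "[int (p n) + S = int (p 0) + int n * S + S] (mod int N)"
    using Suc by (intro cong_add) auto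
  finally show ?case by (simp add: algebra_simps)
qed

lemma path_diff_cong_of_progression:
  assumes "\<forall>n<N. [int (q n) = c + int n * T] (mod int N)" and "n < N"
  shows "[path_diff N q n = T] (mod int N)"
proof (cases "Suc n = N")
  case True
  have "[int (q 0) - int (q n) = (c + 0 * T) - (c + int n * T)] (mod int N)"
    using assms True by (intro cong_diff) auto
  also have "(c + 0 * T) - (c + int n * T) = T - int N * T"
    using True by (simp flip: True add: algebra_simps)
  also have "[T - int N * T = T] (mod int N)"
    by (simp add: cong_iff_dvd_diff)
  finally show ?thesis using True by (simp add: path_diff_def)
next
  case False
  then have "Suc n < N" using assms(2) by simp
  then have "[int (q (Suc n)) - int (q n) = (c + int (Suc n) * T) - (c + int n * T)] (mod int N)"
    using assms by (intro cong_diff) auto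
  then show ?thesis using \<open>Suc n < N\<close> by (simp add: path_diff_def algebra_simps)
qed

lemma path_step_of_progression:
  assumes "\<forall>n<N. q n < N" and "\<forall>n<N. [int (q n) = c + int n * T] (mod int N)" and "n < N"
  shows "path_step N q n = centred_mod (int N) T"
proof -
  have "Suc n mod N < N" using assms(3) by simp
  then have "path_step N q n = centred_mod (int N) (path_diff N q n)"
    using assms by (intro path_step_eq_centred_mod) auto
  also have "\<dots> = centred_mod (int N) T"
    using path_diff_cong_of_progression[OF assms(2,3)] by (rule centred_mod_cong_eq)
  finally show ?thesis .
qed

lemma progression_step_invertible:
  assumes "0 < N" and "bij_betw p {..<N} {..<N}"
    and "\<forall>n<N. [int (p n) = c + int n * S] (mod int N)"
  obtains T where "[T * S = 1] (mod int N)"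
proof -
  obtain t where t: "t < N" "p t = Suc (p 0) mod N"
    using assms(1,2) unfolding bij_betw_def by (metis imageE lessThan_iff mod_less_divisor)
  have "[c + int t * S = int (p t)] (mod int N)"
    using assms(3) t(1) by (simp add: cong_sym)
  also have "[int (p t) = int (p 0) + 1] (mod int N)"
    using t(2) by (simp add: cong_def zmod_int add.commute)
  also have "[int (p 0) + 1 = c + 1] (mod int N)"
    using assms(1,3) by (intro cong_add) auto
  finally have "[int t * S = 1] (mod int N)"
    by (simp add: cong_add_lcancel)
  then show ?thesis by (rule that)
qed

lemma the_inv_into_progression:
  assumes "bij_betw p {..<N} {..<N}" and "\<forall>n<N. [int (p n) = c + int n * S] (mod int N)"
    and "[T * S = 1] (mod int N)" and "m < N"
  shows "[int (the_inv_into {..<N} p m) = - c * T + int m * T] (mod int N)"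
proof -
  let ?k = "the_inv_into {..<N} p m"
  have "?k < N"
    using bij_betwE[OF bij_betw_the_inv_into[OF assms(1)]] assms(4) by blast
  have "p ?k = m"
    using assms(1,4) by (simp add: f_the_inv_into_f_bij_betw)
  have "[int m = c + int ?k * S] (mod int N)"
    using assms(2) \<open>?k < N\<close> \<open>p ?k = m\<close> by metis
  then have "[int m * T = (c + int ?k * S) * T] (mod int N)"
    by (rule cong_scalar_right)
  moreover have "(c + int ?k * S) * T = c * T + int ?k * (T * S)"
    by (simp add: algebra_simps)
  moreover have "[c * T + int ?k * (T * S) = c * T + int ?k * 1] (mod int N)"
    using assms(3) by (intro cong_add cong_scalar_left) auto
  ultimately have "[int m * T = c * T + int ?k] (mod int N)"
    by (auto intro: cong_trans)
  then show ?thesis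
    by (simp add: cong_iff_dvd_diff algebra_simps dvd_diff_commute)
qed

lemma centred_inverse_abs_one:
  fixes R S M :: int
  assumes "[R * S = 1] (mod M)" and "\<bar>R\<bar> = 1"
    and "- M < 2 * R" and "2 * R \<le> M" and "- M < 2 * S" and "2 * S \<le> M"
  shows "\<bar>S\<bar> = 1"
proof -
  have "R * R = 1" using abs_mult_self_eq[of R] assms(2) by simp
  then have "S = R * (R * S)" by (simp flip: mult.assoc)
  also have "[R * (R * S) = R * 1] (mod M)"
    using assms(1) by (rule cong_scalar_left)
  finally have "[S = R] (mod M)" by simp
  then have "centred_mod M R = S" and "centred_mod M R = R"
    using assms(3-6) by (auto intro: centred_mod_unique)
  then show ?thesis using assms(2) by simp
qed

theorem mainTheorem10:
  fixes w0 w1 :: "'a list" and p :: "nat \<Rightarrow> nat" and N :: nat and S :: int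
  assumes "2 \<le> N"
    and "length w0 = N" and "length w1 = N"
    and "perfect_star_anagram N w0 w1 p"
    and "\<forall>n<N. path_step N p n = S"
  shows "perfect_star_anagram N w1 w0 (rev_path N p) \<and>
         (\<exists>Sbar::int. (\<forall>n<N. path_step N (rev_path N p) n = Sbar) \<and> (Sbar * S) mod int N = 1)"
proof -
  let ?q = "rev_path N p"
  have bij: "bij_betw p {..<N} {..<N}" and word: "\<forall>n<N. w1 ! n = w0 ! p n"
    and star: "\<forall>n<N. \<bar>path_step N p n\<bar> \<noteq> 1"
    using assms(4) unfolding perfect_star_anagram_def path_for_def perfect_star_path_def
      star_path_def is_path_def by blast+
  have N: "0 < N" "0 < int N" using assms(1) by simp_all
  have bij_q: "bij_betw ?q {..<N} {..<N}"
    unfolding rev_path_def using bij by (rule bij_betw_the_inv_into)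
  have q_into: "\<forall>m<N. ?q m < N" and p_q: "\<forall>m<N. p (?q m) = m"
    using bij bij_betw_apply[OF bij_q] by (simp_all add: rev_path_def f_the_inv_into_f_bij_betw)
  have "S = centred_mod (int N) (path_diff N p 0)"
    using assms(5) N bij_betw_apply[OF bij] by (simp add: path_step_eq_centred_mod)
  then have S_centred: "- int N < 2 * S" "2 * S \<le> int N"
    using centred_mod_bounds[OF N(2)] by simp_all
  have "\<forall>n<N. [path_diff N p n = S] (mod int N)"
    using assms(5) path_step_cong by (metis cong_sym)
  then have p_prog: "\<forall>n<N. [int (p n) = int (p 0) + int n * S] (mod int N)"
    using progression_of_path_diff_cong by blast
  obtain T where TS: "[T * S = 1] (mod int N)"
    using progression_step_invertible[OF N(1) bij p_prog] .
  have "\<forall>m<N. [int (?q m) = - int (p 0) * T + int m * T] (mod int N)"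
    unfolding rev_path_def using the_inv_into_progression[OF bij p_prog TS] by blast
  then have q_steps: "\<forall>m<N. path_step N ?q m = centred_mod (int N) T"
    using path_step_of_progression[OF q_into] by blast
  have SbS: "[centred_mod (int N) T * S = 1] (mod int N)"
    using cong_trans[OF cong_scalar_right[OF centred_mod_cong] TS] .
  have "\<bar>S\<bar> \<noteq> 1"
    using star assms(5) N(1) by auto
  then have "\<bar>centred_mod (int N) T\<bar> \<noteq> 1"
    using centred_inverse_abs_one[OF SbS _ centred_mod_bounds[OF N(2)] S_centred] by blast
  then show ?thesis
    using assms(1-3) bij_q q_into p_q q_steps word SbS
    by (auto simp: perfect_star_anagram_def path_for_def perfect_star_path_def star_path_def
        is_path_def cong_def)
qed

end
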